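(* Let $(C_1,\sigma_1)$ and $(C_2,\sigma_2)$ be signed cycles and $(P,\pi)=(C_1,\sigma_1)\,\square\,(C_2,\sigma_2)$. Then $\chi_s(P,\pi)$ depends only on the types of the two cycles and is symmetric in them, given as follows: $BC_{even}\square BC_{even}$: $2$; $BC_{even}\square BC_{odd}$: $3$; $BC_{even}\square UC_{even}$: $4$; $BC_{even}\square UC_{odd}$: $3$; $BC_{odd}\square BC_{odd}$: $3$; $BC_{odd}\square UC_{even}$: $5$; $BC_{odd}\square UC_{odd}$: $5$; $UC_{even}\square UC_{even}$: $4$; $UC_{even}\square UC_{odd}$: $5$; $UC_{odd}\square UC_{odd}$: $3$.
   Context: A signed graph $(G,\sigma)$ is a simple loopless undirected graph with a signature $\sigma:E(G)\to\{+1,-1\}$. Switching a vertex negates the signs of its incident edges; two signatures are equivalent if one is obtained from the other by switching a set of vertices. A homomorphism of $(G,\sigma)$ to $(H,\pi)$ is a graph homomorphism $\varphi:G\to H$ for which there is a signature $\sigma'$ equivalent to $\sigma$ with $\pi(\varphi(u)\varphi(v))=\sigma'(uv)$ for every edge $uv$; $\chi_s(G,\sigma)$ is the smallest order of a signed graph to which $(G,\sigma)$ admits a homomorphism. A signed cycle (cycle of length at least $3$) is balanced if it has an even number of negative edges, unbalanced otherwise; $BC_{even}$, $BC_{odd}$, $UC_{even}$, $UC_{odd}$ denote balanced cycles of even length, balanced of odd length, unbalanced of even length, unbalanced of odd length. The Cartesian product $(G,\sigma)\,\square\,(H,\pi)$ is the signed graph on $G\,\square\,H$ where $(u,v_1)(u,v_2)$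 has sign $\pi(v_1v_2)$ and $(u_1,v)(u_2,v)$ has sign $\sigma(u_1u_2)$. *)

theory Defs
  imports Main
begin

text \<open>A signed graph is given by a finite vertex set V, a set E of edges
  (two-element subsets of V: simple, loopless, undirected) and the set N \<subseteq> E
  of negative edges (the signature is -1 exactly on N, +1 on E - N).\<close>

definition signed_graph :: "'a set \<Rightarrow> 'a set set \<Rightarrow> 'a set set \<Rightarrow> bool" where
  "signed_graph V E N \<longleftrightarrow> finite V \<and>
     E \<subseteq> {{u, v} | u v. u \<in> V \<and> v \<in> V \<and> u \<noteq> v} \<and> N \<subseteq> E"

definition switch :: "'a set set \<Rightarrow> 'a set set \<Rightarrow> 'a set \<Rightarrow> 'a set set" where
  "switch E N X = {e \<in> E. (e \<in> N) \<noteq> (card (e \<inter> X) = 1)}"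

definition signed_hom ::
  "'a set \<Rightarrow> 'a set set \<Rightarrow> 'a set set \<Rightarrow> 'b set \<Rightarrow> 'b set set \<Rightarrow> 'b set set \<Rightarrow> ('a \<Rightarrow> 'b) \<Rightarrow> bool" where
  "signed_hom V E N W F M \<phi> \<longleftrightarrow>
     (\<forall>v\<in>V. \<phi> v \<in> W) \<and> (\<forall>e\<in>E. \<phi> ` e \<in> F) \<and>
     (\<exists>X \<subseteq> V. \<forall>e\<in>E. (\<phi> ` e \<in> M \<longleftrightarrow> e \<in> switch E N X))"

text \<open>Signed chromatic number: the smallest order of a signed graph to which
  (V,E,N) maps; up to isomorphism the target may be taken on vertex set {0..<n}.\<close>
definition chi_s :: "'a set \<Rightarrow> 'a set set \<Rightarrow> 'a set set \<Rightarrow> nat" where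
  "chi_s V E N = (LEAST n. \<exists>F M (\<phi> :: 'a \<Rightarrow> nat).
      signed_graph {0..<n} F M \<and> signed_hom V E N {0..<n} F M \<phi>)"

definition is_cycle :: "'a set \<Rightarrow> 'a set set \<Rightarrow> nat \<Rightarrow> bool" where
  "is_cycle V E n \<longleftrightarrow> n \<ge> 3 \<and>
     (\<exists>f. bij_betw f {..<n} V \<and> E = {{f i, f (Suc i mod n)} | i. i < n})"

definition signed_cycle :: "'a set \<Rightarrow> 'a set set \<Rightarrow> 'a set set \<Rightarrow> bool" where
  "signed_cycle V E N \<longleftrightarrow> (\<exists>n. is_cycle V E n) \<and> N \<subseteq> E"

datatype ctype = BC_even | BC_odd | UC_even | UC_odd

text \<open>Type of a signed cycle: balanced iff even number of negative edges;
  parity of the length = parity of the number of vertices.\<close>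
definition cycle_type :: "'a set \<Rightarrow> 'a set set \<Rightarrow> ctype" where
  "cycle_type V N =
     (if even (card N) then (if even (card V) then BC_even else BC_odd)
      else (if even (card V) then UC_even else UC_odd))"

definition prod_V :: "'a set \<Rightarrow> 'b set \<Rightarrow> ('a \<times> 'b) set" where
  "prod_V V1 V2 = V1 \<times> V2"

definition prod_E :: "'a set \<Rightarrow> 'a set set \<Rightarrow> 'b set \<Rightarrow> 'b set set \<Rightarrow> ('a \<times> 'b) set set" where
  "prod_E V1 E1 V2 E2 =
     {{(u, v1), (u, v2)} | u v1 v2. u \<in> V1 \<and> {v1, v2} \<in> E2} \<union>
     {{(u1, v), (u2, v)} | u1 u2 v. {u1, u2} \<in> E1 \<and> v \<in> V2}"

definition prod_N :: "'a set \<Rightarrow> 'a set set \<Rightarrow> 'b set \<Rightarrow> 'b set set \<Rightarrow> ('a \<times> 'b) set set" where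
  "prod_N V1 N1 V2 N2 =
     {{(u, v1), (u, v2)} | u v1 v2. u \<in> V1 \<and> {v1, v2} \<in> N2} \<union>
     {{(u1, v), (u2, v)} | u1 u2 v. {u1, u2} \<in> N1 \<and> v \<in> V2}"

fun chi_table :: "ctype \<Rightarrow> ctype \<Rightarrow> nat" where
  "chi_table BC_even BC_even = 2"
| "chi_table BC_even BC_odd = 3"
| "chi_table BC_even UC_even = 4"
| "chi_table BC_even UC_odd = 3"
| "chi_table BC_odd BC_even = 3"
| "chi_table BC_odd BC_odd = 3"
| "chi_table BC_odd UC_even = 5"
| "chi_table BC_odd UC_odd = 5"
| "chi_table UC_even BC_even = 4"
| "chi_table UC_even BC_odd = 5"
| "chi_table UC_even UC_even = 4"
| "chi_table UC_even UC_odd = 5"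
| "chi_table UC_odd BC_even = 3"
| "chi_table UC_odd BC_odd = 5"
| "chi_table UC_odd UC_even = 5"
| "chi_table UC_odd UC_odd = 3"

end

theory Submission
  imports Defs
begin

(* Index the product of cycles of lengths m and n by the torus grid {..<m} x {..<n}; a homomorphism
   to a signed graph on k vertices is then a proper k-colouring of the grid together with a switching
   set and a signature on the colours.

   The lower bounds are parity arguments. An odd cycle needs three colours. Every signed triangle is
   switching equivalent to one of constant sign, so an unbalanced even cycle, read along a row of the
   grid, does not map to three vertices. The grid is 4-regular, so the parity of n |N1| + m |N2|, the
   number of its negative edges, is invariant under switching; but under a map to four vertices, which
   keeps every square of the grid balanced, the number of edges sent to negative edges is even.

   For the upper bounds, switching moves all negative edges of each cycle onto its closing edge, the
   cycle folds onto C3 or C4 (according to its parity) along that edge, and the sixteen products of C3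
   and C4 with at most one negative edge each are mapped explicitly. *)

section \<open>Homomorphisms of the signed torus grid\<close>

definition edge_hom :: "nat \<Rightarrow> (nat \<Rightarrow> nat \<Rightarrow> bool) \<Rightarrow> bool \<Rightarrow> nat \<Rightarrow> nat \<Rightarrow> bool \<Rightarrow> bool \<Rightarrow> bool" where
  "edge_hom k pm s a b xa xb \<longleftrightarrow> a < k \<and> b < k \<and> a \<noteq> b \<and> pm a b = (s \<noteq> (xa \<noteq> xb))"

lemma edge_hom_doubleton:
  assumes "\<And>a b. pm a b = pm b a" and "{u, v} = {a, b}"
    and "edge_hom k pm s (f a) (f b) (y a) (y b)"
  shows "edge_hom k pm s (f u) (f v) (y u) (y v)"
  using assms by (auto simp: edge_hom_def doubleton_eq_iff)

(* s1 i (s2 j) says that the edge {i, Suc i mod m} of C_m ({j, Suc j mod n} of C_n) is negative;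
   x is the switching set and pm the set of negative edges of the target. *)
definition torus_hom ::
  "nat \<Rightarrow> nat \<Rightarrow> (nat \<Rightarrow> bool) \<Rightarrow> (nat \<Rightarrow> bool) \<Rightarrow> nat \<Rightarrow>
   (nat \<Rightarrow> nat \<Rightarrow> nat) \<Rightarrow> (nat \<Rightarrow> nat \<Rightarrow> bool) \<Rightarrow> (nat \<Rightarrow> nat \<Rightarrow> bool) \<Rightarrow> bool" where
  "torus_hom m n s1 s2 k c x pm \<longleftrightarrow> (\<forall>a b. pm a b = pm b a) \<and>
     (\<forall>i<m. \<forall>j<n.
        edge_hom k pm (s1 i) (c i j) (c (Suc i mod m) j) (x i j) (x (Suc i mod m) j) \<and>
        edge_hom k pm (s2 j) (c i j) (c i (Suc j mod n)) (x i j) (x i (Suc j mod n)))"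

lemma torus_hom_transpose:
  "torus_hom m n s1 s2 k c x pm \<Longrightarrow> torus_hom n m s2 s1 k (\<lambda>j i. c i j) (\<lambda>j i. x i j) pm"
  unfolding torus_hom_def by auto

lemma torus_hom_switch:
  assumes "torus_hom m n s1' s2' k c x pm"
    and "\<And>i. i < m \<Longrightarrow> s1 i = (s1' i \<noteq> (t1 i \<noteq> t1 (Suc i mod m)))"
    and "\<And>j. j < n \<Longrightarrow> s2 j = (s2' j \<noteq> (t2 j \<noteq> t2 (Suc j mod n)))"
  shows "torus_hom m n s1 s2 k c (\<lambda>i j. (x i j \<noteq> t1 i) \<noteq> t2 j) pm"
  using assms unfolding torus_hom_def edge_hom_def by auto

lemma sum_rotate:
  assumes "0 < n"
  shows "(\<Sum>j<n. f (Suc j mod n)) = (\<Sum>j<n. f j :: 'a::comm_monoid_add)"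
proof -
  obtain n' where n: "n = Suc n'" using assms by (cases n) auto
  have "(\<Sum>j<n. f (Suc j mod n)) = (\<Sum>j<n'. f (Suc j)) + f 0"
    unfolding n by simp
  also have "\<dots> = (\<Sum>j<n. f j)"
    unfolding n sum.lessThan_Suc_shift by (simp add: add.commute)
  finally show ?thesis .
qed

lemma even_cyclic_changes:
  fixes g :: "nat \<Rightarrow> bool"
  assumes "0 < n"
  shows "even (\<Sum>j<n. of_bool (g j \<noteq> g (Suc j mod n)) :: nat)"
proof -
  have xor: "of_bool (a \<noteq> b) + 2 * of_bool (a \<and> b) = of_bool a + (of_bool b :: nat)" for a b
    by (cases a; cases b) auto
  have "(\<Sum>j<n. of_bool (g j \<noteq> g (Suc j mod n)) :: nat) + 2 * (\<Sum>j<n. of_bool (g j \<and> g (Suc j mod n)))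
      = (\<Sum>j<n. of_bool (g j)) + (\<Sum>j<n. of_bool (g (Suc j mod n)))"
    unfolding sum_distrib_left sum.distrib[symmetric] by (rule sum.cong) (auto simp: xor)
  also have "\<dots> = 2 * (\<Sum>j<n. of_bool (g j))"
    by (simp only: sum_rotate[OF assms, of "\<lambda>j. of_bool (g j)"] mult_2)
  finally show ?thesis by presburger
qed

section \<open>Lower bounds\<close>

lemma torus_hom_colours_ge_2:
  assumes "torus_hom m n s1 s2 k c x pm" "0 < m" "0 < n"
  shows "2 \<le> k"
proof -
  have "edge_hom k pm (s1 0) (c 0 0) (c (Suc 0 mod m) 0) (x 0 0) (x (Suc 0 mod m) 0)"
    using assms unfolding torus_hom_def by blast
  then show ?thesis unfolding edge_hom_def by (elim conjE) linarith
qed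

lemma torus_hom_odd_colours_ge_3:
  assumes "torus_hom m n s1 s2 k c x pm" "odd m" "0 < n"
  shows "3 \<le> k"
proof (rule ccontr)
  assume "\<not> 3 \<le> k"
  have m: "0 < m" using \<open>odd m\<close> by presburger
  have change: "(of_bool ((c i 0 = 1) \<noteq> (c (Suc i mod m) 0 = 1)) :: nat) = 1" if "i < m" for i
  proof -
    have "c i 0 < k" "c (Suc i mod m) 0 < k" "c i 0 \<noteq> c (Suc i mod m) 0"
      using assms(1,3) that unfolding torus_hom_def edge_hom_def by auto
    then show ?thesis using \<open>\<not> 3 \<le> k\<close> by auto
  qed
  have "(\<Sum>i<m. of_bool ((c i 0 = 1) \<noteq> (c (Suc i mod m) 0 = 1)) :: nat) = m"
    using change by simp
  then show False using even_cyclic_changes[OF m, of "\<lambda>i. c i 0 = 1"] \<open>odd m\<close> by simp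
qed

lemma triangle_signature_switching:
  fixes pm :: "nat \<Rightarrow> nat \<Rightarrow> bool"
  assumes sym: "\<And>a b. pm a b = pm b a"
  obtains h :: "nat \<Rightarrow> bool" and \<kappa>
  where "\<And>a b. a < 3 \<Longrightarrow> b < 3 \<Longrightarrow> a \<noteq> b \<Longrightarrow> pm a b = ((h a \<noteq> h b) \<noteq> \<kappa>)"
proof -
  define \<kappa> where "\<kappa> = ((pm 0 1 \<noteq> pm 0 2) \<noteq> pm 1 2)"
  define h where "h a = (a \<noteq> 0 \<and> (pm 0 a \<noteq> \<kappa>))" for a :: nat
  have s: "pm (Suc 0) 0 = pm 0 (Suc 0)" "pm 2 0 = pm 0 2" "pm 2 (Suc 0) = pm (Suc 0) 2"
    using sym by auto
  have lt3: "(x::nat) < 3 \<longleftrightarrow> x = 0 \<or> x = 1 \<or> x = 2" for x by auto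
  have "pm a b = ((h a \<noteq> h b) \<noteq> \<kappa>)" if "a < 3" "b < 3" "a \<noteq> b" for a b
    using that unfolding lt3 h_def \<kappa>_def by (elim disjE) (simp_all add: s, argo+)
  then show ?thesis by (rule that)
qed

lemma torus_hom_unbalanced_even_colours_ge_4:
  assumes hom: "torus_hom m n s1 s2 k c x pm" and "0 < m" "even n"
    and unbalanced: "odd (\<Sum>j<n. of_bool (s2 j) :: nat)"
  shows "4 \<le> k"
proof (rule ccontr)
  assume "\<not> 4 \<le> k"
  have n: "0 < n" using unbalanced by (intro gr0I) simp
  have sym: "\<And>a b. pm a b = pm b a" using hom unfolding torus_hom_def by blast
  obtain h :: "nat \<Rightarrow> bool" and \<kappa> where triangle: "\<And>a b. a < 3 \<Longrightarrow> b < 3 \<Longrightarrow> a \<noteq> b \<Longrightarrow> pm a b = ((h a \<noteq> h b) \<noteq> \<kappa>)"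
    using triangle_signature_switching[of pm, OF sym] by blast
  define g where "g j = (h (c 0 j) \<noteq> x 0 j)" for j
  have "even (of_bool (s2 j) + of_bool (g j \<noteq> g (Suc j mod n)) + of_bool \<kappa> :: nat)" if "j < n" for j
  proof -
    have "edge_hom k pm (s2 j) (c 0 j) (c 0 (Suc j mod n)) (x 0 j) (x 0 (Suc j mod n))"
      using hom \<open>0 < m\<close> that unfolding torus_hom_def by blast
    then have e: "c 0 j < 3" "c 0 (Suc j mod n) < 3" "c 0 j \<noteq> c 0 (Suc j mod n)"
      "pm (c 0 j) (c 0 (Suc j mod n)) = (s2 j \<noteq> (x 0 j \<noteq> x 0 (Suc j mod n)))"
      using \<open>\<not> 4 \<le> k\<close> unfolding edge_hom_def by auto
    then have "s2 j = ((g j \<noteq> g (Suc j mod n)) \<noteq> \<kappa>)"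
      using triangle[OF e(1-3)] unfolding g_def by argo
    then show ?thesis by (cases "g j \<noteq> g (Suc j mod n)"; cases \<kappa>) simp_all
  qed
  then have "even (\<Sum>j<n. of_bool (s2 j) + of_bool (g j \<noteq> g (Suc j mod n)) + of_bool \<kappa> :: nat)"
    by (intro dvd_sum) simp
  then have "even ((\<Sum>j<n. of_bool (s2 j)) + (\<Sum>j<n. of_bool (g j \<noteq> g (Suc j mod n))) + n * of_bool \<kappa> :: nat)"
    by (simp only: sum.distrib sum_constant card_lessThan of_nat_id)
  then show False using even_cyclic_changes[OF n, of g] \<open>even n\<close> unbalanced by simp
qed

(* Summed over all squares of the torus, the left-hand side counts every grid edge once and the
   right-hand side every oriented grid edge twice. *)
lemma K4_square_cochain:
  fixes pm :: "nat \<Rightarrow> nat \<Rightarrow> bool"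
  assumes sym: "\<And>a b. pm a b = pm b a"
  obtains \<theta> :: "nat \<Rightarrow> nat \<Rightarrow> bool" where "\<And>a b c d. a < 4 \<Longrightarrow> b < 4 \<Longrightarrow> c < 4 \<Longrightarrow> d < 4 \<Longrightarrow>
      a \<noteq> b \<Longrightarrow> b \<noteq> c \<Longrightarrow> c \<noteq> d \<Longrightarrow> d \<noteq> a \<Longrightarrow>
      (pm a b \<noteq> pm b c) = (pm d c \<noteq> pm a d) \<Longrightarrow>
      (pm a b \<noteq> pm a d) = ((\<theta> a b \<noteq> \<theta> d c) \<noteq> (\<theta> a d \<noteq> \<theta> b c))"
proof -
  define \<kappa> where "\<kappa> = ((pm 1 2 \<noteq> pm 1 3) \<noteq> pm 2 3)"
  define \<theta> where "\<theta> x y = (if x < y then (if x = 2 \<and> y = 3 then pm 1 3 else pm x y)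
      else if x = 3 \<and> y = 2 then pm 1 2 else \<kappa>)" for x y
  have s: "pm (Suc 0) 0 = pm 0 (Suc 0)" "pm 2 0 = pm 0 2" "pm 3 0 = pm 0 3"
    "pm 2 (Suc 0) = pm (Suc 0) 2" "pm 3 (Suc 0) = pm (Suc 0) 3" "pm 3 2 = pm 2 3"
    using sym by auto
  have lt4: "(x::nat) < 4 \<longleftrightarrow> x = 0 \<or> x = 1 \<or> x = 2 \<or> x = 3" for x by auto
  have "(pm a b \<noteq> pm a d) = ((\<theta> a b \<noteq> \<theta> d c) \<noteq> (\<theta> a d \<noteq> \<theta> b c))"
    if "a < 4" "b < 4" "c < 4" "d < 4" "a \<noteq> b" "b \<noteq> c" "c \<noteq> d" "d \<noteq> a"
      "(pm a b \<noteq> pm b c) = (pm d c \<noteq> pm a d)" for a b c d :: nat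
    using that unfolding lt4 \<theta>_def \<kappa>_def by (elim disjE) (simp_all add: s, argo+)
  then show ?thesis by (rule that)
qed

lemma even_torus_sum_coboundary:
  fixes N H V :: "nat \<Rightarrow> nat \<Rightarrow> nat"
  assumes m: "0 < m" and n: "0 < n"
    and "\<And>i j. i < m \<Longrightarrow> j < n \<Longrightarrow> even (N i j + (H i j + H i (Suc j mod n) + V i j + V (Suc i mod m) j))"
  shows "even (\<Sum>i<m. \<Sum>j<n. N i j)"
proof -
  have "even (\<Sum>i<m. \<Sum>j<n. N i j + (H i j + H i (Suc j mod n) + V i j + V (Suc i mod m) j))"
    using assms(3) by (intro dvd_sum) simp
  also have "(\<Sum>i<m. \<Sum>j<n. N i j + (H i j + H i (Suc j mod n) + V i j + V (Suc i mod m) j))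
    = (\<Sum>i<m. \<Sum>j<n. N i j) + ((\<Sum>i<m. \<Sum>j<n. H i j) + (\<Sum>i<m. \<Sum>j<n. H i (Suc j mod n))
      + (\<Sum>i<m. \<Sum>j<n. V i j) + (\<Sum>i<m. \<Sum>j<n. V (Suc i mod m) j))"
    by (simp only: sum.distrib)
  also have "(\<Sum>i<m. \<Sum>j<n. H i (Suc j mod n)) = (\<Sum>i<m. \<Sum>j<n. H i j)"
    by (rule sum.cong[OF refl], rule sum_rotate[OF n])
  also have "(\<Sum>i<m. \<Sum>j<n. V (Suc i mod m) j) = (\<Sum>i<m. \<Sum>j<n. V i j)"
    using sum_rotate[OF m, of "\<lambda>i. \<Sum>j<n. V i j"] by simp
  finally show ?thesis by presburger
qed

definition negative_image_count :: "nat \<Rightarrow> nat \<Rightarrow> (nat \<Rightarrow> nat \<Rightarrow> nat) \<Rightarrow> (nat \<Rightarrow> nat \<Rightarrow> bool) \<Rightarrow> nat" where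
  "negative_image_count m n c pm =
     (\<Sum>i<m. \<Sum>j<n. of_bool (pm (c i j) (c (Suc i mod m) j)) + of_bool (pm (c i j) (c i (Suc j mod n))))"

lemma torus_hom_negative_parity:
  assumes hom: "torus_hom m n s1 s2 k c x pm" and m: "0 < m" and n: "0 < n"
  shows "even (negative_image_count m n c pm + n * (\<Sum>i<m. of_bool (s1 i)) + m * (\<Sum>j<n. of_bool (s2 j)))"
proof -
  define N where "N i j = (of_bool (pm (c i j) (c (Suc i mod m) j)) + of_bool (pm (c i j) (c i (Suc j mod n))) :: nat)" for i j
  define X where "X i j = (of_bool (x i j) :: nat)" for i j
  have "even (\<Sum>i<m. \<Sum>j<n. N i j + of_bool (s1 i) + of_bool (s2 j))"
  proof (rule even_torus_sum_coboundary[OF m n, where H = X and V = X])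
    fix i j assume "i < m" "j < n"
    then have "pm (c i j) (c (Suc i mod m) j) = (s1 i \<noteq> (x i j \<noteq> x (Suc i mod m) j))"
      "pm (c i j) (c i (Suc j mod n)) = (s2 j \<noteq> (x i j \<noteq> x i (Suc j mod n)))"
      using hom unfolding torus_hom_def edge_hom_def by blast+
    then show "even (N i j + of_bool (s1 i) + of_bool (s2 j) + (X i j + X i (Suc j mod n) + X i j + X (Suc i mod m) j))"
      unfolding N_def X_def by simp
  qed
  also have "(\<Sum>i<m. \<Sum>j<n. N i j + of_bool (s1 i) + of_bool (s2 j))
    = negative_image_count m n c pm + n * (\<Sum>i<m. of_bool (s1 i)) + m * (\<Sum>j<n. of_bool (s2 j))"
    unfolding negative_image_count_def N_def
    by (simp only: sum.distrib sum_constant card_lessThan of_nat_id sum_distrib_left mult.commute)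
  finally show ?thesis .
qed

lemma torus_hom_K4_negative_even:
  assumes hom: "torus_hom m n s1 s2 k c x pm" and "k \<le> 4" and m: "0 < m" and n: "0 < n"
  shows "even (negative_image_count m n c pm)"
proof -
  have sym: "\<And>a b. pm a b = pm b a" using hom unfolding torus_hom_def by blast
  obtain \<theta> :: "nat \<Rightarrow> nat \<Rightarrow> bool" where square: "\<And>a b c d. a < 4 \<Longrightarrow> b < 4 \<Longrightarrow> c < 4 \<Longrightarrow> d < 4 \<Longrightarrow>
      a \<noteq> b \<Longrightarrow> b \<noteq> c \<Longrightarrow> c \<noteq> d \<Longrightarrow> d \<noteq> a \<Longrightarrow> (pm a b \<noteq> pm b c) = (pm d c \<noteq> pm a d) \<Longrightarrow>
      (pm a b \<noteq> pm a d) = ((\<theta> a b \<noteq> \<theta> d c) \<noteq> (\<theta> a d \<noteq> \<theta> b c))"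
    using K4_square_cochain[of pm, OF sym] by blast
  have even_of_bool: "even (of_bool p :: nat) \<longleftrightarrow> \<not> p" for p
    by simp
  show ?thesis
    unfolding negative_image_count_def
  proof (rule even_torus_sum_coboundary[OF m n,
        where H = "\<lambda>i j. of_bool (\<theta> (c i j) (c (Suc i mod m) j))"
          and V = "\<lambda>i j. of_bool (\<theta> (c i j) (c i (Suc j mod n)))"])
    fix i j assume "i < m" "j < n"
    let ?i = "Suc i mod m" and ?j = "Suc j mod n"
    have "?i < m" "?j < n" using m n by auto
    then have "edge_hom k pm (s1 i) (c i j) (c ?i j) (x i j) (x ?i j)"
      "edge_hom k pm (s2 j) (c ?i j) (c ?i ?j) (x ?i j) (x ?i ?j)"
      "edge_hom k pm (s1 i) (c i ?j) (c ?i ?j) (x i ?j) (x ?i ?j)"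
      "edge_hom k pm (s2 j) (c i j) (c i ?j) (x i j) (x i ?j)"
      using hom \<open>i < m\<close> \<open>j < n\<close> unfolding torus_hom_def by blast+
    then have "(pm (c i j) (c ?i j) \<noteq> pm (c i j) (c i ?j)) =
        ((\<theta> (c i j) (c ?i j) \<noteq> \<theta> (c i ?j) (c ?i ?j)) \<noteq> (\<theta> (c i j) (c i ?j) \<noteq> \<theta> (c ?i j) (c ?i ?j)))"
      using \<open>k \<le> 4\<close> unfolding edge_hom_def by (intro square) auto
    then show "even (of_bool (pm (c i j) (c ?i j)) + of_bool (pm (c i j) (c i ?j)) +
        (of_bool (\<theta> (c i j) (c ?i j)) + of_bool (\<theta> (c i ?j) (c ?i ?j)) +
         of_bool (\<theta> (c i j) (c i ?j)) + of_bool (\<theta> (c ?i j) (c ?i ?j))) :: nat)"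
      unfolding even_add even_of_bool by argo
  qed
qed

lemma torus_hom_colours_ge_5:
  assumes hom: "torus_hom m n s1 s2 k c x pm" and m: "0 < m" and n: "0 < n"
    and odd: "odd (n * (\<Sum>i<m. of_bool (s1 i)) + m * (\<Sum>j<n. of_bool (s2 j)) :: nat)"
  shows "5 \<le> k"
proof (rule ccontr)
  assume "\<not> 5 \<le> k"
  then have "even (negative_image_count m n c pm)"
    using torus_hom_K4_negative_even[OF hom _ m n] by simp
  then show False using torus_hom_negative_parity[OF hom m n] odd by presburger
qed

definition cycle_class :: "nat \<Rightarrow> nat \<Rightarrow> ctype" where
  "cycle_class neg len =
     (if even neg then (if even len then BC_even else BC_odd)
      else (if even len then UC_even else UC_odd))"

lemma cycle_type_eq_cycle_class: "cycle_type V N = cycle_class (card N) (card V)"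
  unfolding cycle_type_def cycle_class_def ..

lemma chi_table_le_torus_hom:
  assumes hom: "torus_hom m n s1 s2 k c x pm" and m: "0 < m" and n: "0 < n"
  shows "chi_table (cycle_class (\<Sum>i<m. of_bool (s1 i)) m) (cycle_class (\<Sum>j<n. of_bool (s2 j)) n) \<le> k"
proof -
  define S1 where "S1 = (\<Sum>i<m. of_bool (s1 i) :: nat)"
  define S2 where "S2 = (\<Sum>j<n. of_bool (s2 j) :: nat)"
  note hom' = torus_hom_transpose[OF hom]
  have "2 \<le> k"
    using torus_hom_colours_ge_2[OF hom m n] .
  moreover have "3 \<le> k" if "odd m \<or> odd n"
    using that torus_hom_odd_colours_ge_3[OF hom _ n] torus_hom_odd_colours_ge_3[OF hom' _ m] by blast
  moreover have "4 \<le> k" if "even m \<and> odd S1 \<or> even n \<and> odd S2"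
    using that torus_hom_unbalanced_even_colours_ge_4[OF hom m] torus_hom_unbalanced_even_colours_ge_4[OF hom' n]
    unfolding S1_def S2_def by blast
  moreover have "5 \<le> k" if "odd (n * S1 + m * S2)"
    using that torus_hom_colours_ge_5[OF hom m n] unfolding S1_def S2_def by blast
  ultimately show ?thesis
    unfolding S1_def[symmetric] S2_def[symmetric] cycle_class_def
    by (cases "even m"; cases "even n"; cases "even S1"; cases "even S2") auto
qed

section \<open>Upper bounds\<close>

lemma all_less_3: "(\<forall>i<3. P i) \<longleftrightarrow> P 0 \<and> P 1 \<and> P (2::nat)"
  by (auto simp: less_Suc_eq numeral_eq_Suc)

lemma all_less_4: "(\<forall>i<4. P i) \<longleftrightarrow> P 0 \<and> P 1 \<and> P 2 \<and> P (3::nat)"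
  by (auto simp: less_Suc_eq numeral_eq_Suc)

lemma torus_hom_small_cycles:
  "torus_hom 3 3 (\<lambda>i. False) (\<lambda>j. False) 3
     (\<lambda>i j. [[0, 1, 2], [1, 2, 0], [2, 0, 1]] ! i ! j)
     (\<lambda>i j. False)
     (\<lambda>a b. False)"
  "torus_hom 3 3 (\<lambda>i. False) (\<lambda>j. j = 2) 5
     (\<lambda>i j. [[0, 1, 4], [1, 3, 2], [2, 0, 3]] ! i ! j)
     (\<lambda>i j. (i, j) \<in> {(0, 2), (1, 2)})
     (\<lambda>a b. {a, b} \<in> {{1, 4}, {2, 3}, {3, 4}})"
  "torus_hom 3 4 (\<lambda>i. False) (\<lambda>j. False) 3
     (\<lambda>i j. [[0, 1, 0, 1], [1, 2, 1, 2], [2, 0, 2, 0]] ! i ! j)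
     (\<lambda>i j. False)
     (\<lambda>a b. False)"
  "torus_hom 3 4 (\<lambda>i. False) (\<lambda>j. j = 3) 5
     (\<lambda>i j. [[0, 1, 2, 3], [1, 2, 0, 4], [2, 0, 4, 1]] ! i ! j)
     (\<lambda>i j. (i, j) \<in> {(0, 3), (2, 3)})
     (\<lambda>a b. {a, b} \<in> {{1, 4}, {2, 3}, {3, 4}})"
  "torus_hom 3 3 (\<lambda>i. i = 2) (\<lambda>j. False) 5
     (\<lambda>i j. [[0, 1, 2], [1, 3, 0], [4, 2, 3]] ! i ! j)
     (\<lambda>i j. (i, j) \<in> {(2, 0), (2, 1)})
     (\<lambda>a b. {a, b} \<in> {{1, 4}, {2, 3}, {3, 4}})"
  "torus_hom 3 3 (\<lambda>i. i = 2) (\<lambda>j. j = 2) 3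
     (\<lambda>i j. [[0, 1, 2], [1, 2, 0], [2, 0, 1]] ! i ! j)
     (\<lambda>i j. (i, j) \<in> {(0, 2), (1, 1), (1, 2), (2, 0), (2, 1), (2, 2)})
     (\<lambda>a b. {a, b} \<in> {{1, 2}})"
  "torus_hom 3 4 (\<lambda>i. i = 2) (\<lambda>j. False) 3
     (\<lambda>i j. [[0, 1, 0, 1], [1, 2, 1, 2], [2, 0, 2, 0]] ! i ! j)
     (\<lambda>i j. (i, j) \<in> {(1, 1), (1, 3), (2, 0), (2, 1), (2, 2), (2, 3)})
     (\<lambda>a b. {a, b} \<in> {{1, 2}})"
  "torus_hom 3 4 (\<lambda>i. i = 2) (\<lambda>j. j = 3) 5
     (\<lambda>i j. [[0, 1, 2, 3], [1, 3, 0, 4], [4, 2, 3, 0]] ! i ! j)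
     (\<lambda>i j. (i, j) \<in> {(0, 3), (2, 0), (2, 1)})
     (\<lambda>a b. {a, b} \<in> {{1, 4}, {2, 3}, {3, 4}})"
  "torus_hom 4 3 (\<lambda>i. False) (\<lambda>j. False) 3
     (\<lambda>i j. [[0, 1, 2], [1, 2, 0], [0, 1, 2], [1, 2, 0]] ! i ! j)
     (\<lambda>i j. False)
     (\<lambda>a b. False)"
  "torus_hom 4 3 (\<lambda>i. False) (\<lambda>j. j = 2) 3
     (\<lambda>i j. [[0, 1, 2], [1, 2, 0], [0, 1, 2], [1, 2, 0]] ! i ! j)
     (\<lambda>i j. (i, j) \<in> {(0, 2), (1, 1), (1, 2), (2, 2), (3, 1), (3, 2)})
     (\<lambda>a b. {a, b} \<in> {{1, 2}})"
  "torus_hom 4 4 (\<lambda>i. False) (\<lambda>j. False) 2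
     (\<lambda>i j. [[0, 1, 0, 1], [1, 0, 1, 0], [0, 1, 0, 1], [1, 0, 1, 0]] ! i ! j)
     (\<lambda>i j. False)
     (\<lambda>a b. False)"
  "torus_hom 4 4 (\<lambda>i. False) (\<lambda>j. j = 3) 4
     (\<lambda>i j. [[0, 1, 2, 3], [1, 2, 3, 0], [0, 1, 2, 3], [1, 2, 3, 0]] ! i ! j)
     (\<lambda>i j. (i, j) \<in> {(0, 3), (1, 2), (1, 3), (2, 3), (3, 2), (3, 3)})
     (\<lambda>a b. {a, b} \<in> {{2, 3}})"
  "torus_hom 4 3 (\<lambda>i. i = 3) (\<lambda>j. False) 5
     (\<lambda>i j. [[0, 1, 2], [1, 2, 0], [2, 0, 4], [3, 4, 1]] ! i ! j)
     (\<lambda>i j. (i, j) \<in> {(3, 0), (3, 2)})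
     (\<lambda>a b. {a, b} \<in> {{1, 4}, {2, 3}, {3, 4}})"
  "torus_hom 4 3 (\<lambda>i. i = 3) (\<lambda>j. j = 2) 5
     (\<lambda>i j. [[0, 1, 4], [1, 3, 2], [2, 0, 3], [3, 4, 0]] ! i ! j)
     (\<lambda>i j. (i, j) \<in> {(0, 2), (1, 2), (3, 0)})
     (\<lambda>a b. {a, b} \<in> {{1, 4}, {2, 3}, {3, 4}})"
  "torus_hom 4 4 (\<lambda>i. i = 3) (\<lambda>j. False) 4
     (\<lambda>i j. [[0, 1, 0, 1], [1, 2, 1, 2], [2, 3, 2, 3], [3, 0, 3, 0]] ! i ! j)
     (\<lambda>i j. (i, j) \<in> {(2, 1), (2, 3), (3, 0), (3, 1), (3, 2), (3, 3)})
     (\<lambda>a b. {a, b} \<in> {{2, 3}})"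
  "torus_hom 4 4 (\<lambda>i. i = 3) (\<lambda>j. j = 3) 4
     (\<lambda>i j. [[0, 1, 2, 3], [1, 2, 3, 0], [2, 3, 0, 1], [3, 0, 1, 2]] ! i ! j)
     (\<lambda>i j. (i, j) \<in> {(0, 3), (1, 2), (1, 3), (2, 1), (2, 2), (2, 3), (3, 0), (3, 1), (3, 2), (3, 3)})
     (\<lambda>a b. {a, b} \<in> {{2, 3}})"
  unfolding torus_hom_def edge_hom_def all_less_3 all_less_4 by (simp_all add: doubleton_eq_iff) blast+

definition cycle_fold :: "nat \<Rightarrow> nat \<Rightarrow> (nat \<Rightarrow> nat) \<Rightarrow> bool" where
  "cycle_fold m p g \<longleftrightarrow>
     (\<forall>i<m. \<exists>a<p. {g i, g (Suc i mod m)} = {a, Suc a mod p} \<and> (a = p - 1 \<longleftrightarrow> i = m - 1))"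

lemma torus_hom_fold:
  assumes base: "torus_hom p q (\<lambda>a. \<beta>1 \<and> a = p - 1) (\<lambda>b. \<beta>2 \<and> b = q - 1) k c x pm"
    and g: "cycle_fold m p g" and h: "cycle_fold n q h"
  shows "torus_hom m n (\<lambda>i. \<beta>1 \<and> i = m - 1) (\<lambda>j. \<beta>2 \<and> j = n - 1) k
    (\<lambda>i j. c (g i) (h j)) (\<lambda>i j. x (g i) (h j)) pm"
proof -
  have sym: "\<And>a b. pm a b = pm b a" using base unfolding torus_hom_def by blast
  have "edge_hom k pm (\<beta>1 \<and> i = m - 1) (c (g i) (h j)) (c (g (Suc i mod m)) (h j)) (x (g i) (h j)) (x (g (Suc i mod m)) (h j)) \<and>
    edge_hom k pm (\<beta>2 \<and> j = n - 1) (c (g i) (h j)) (c (g i) (h (Suc j mod n))) (x (g i) (h j)) (x (g i) (h (Suc j mod n)))"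
    if "i < m" "j < n" for i j
  proof -
    obtain a where a: "a < p" "{g i, g (Suc i mod m)} = {a, Suc a mod p}" "a = p - 1 \<longleftrightarrow> i = m - 1"
      using g \<open>i < m\<close> unfolding cycle_fold_def by blast
    obtain b where b: "b < q" "{h j, h (Suc j mod n)} = {b, Suc b mod q}" "b = q - 1 \<longleftrightarrow> j = n - 1"
      using h \<open>j < n\<close> unfolding cycle_fold_def by blast
    have "g i < p" "h j < q"
      using a(1,2) b(1,2) by (auto simp: doubleton_eq_iff)
    have "edge_hom k pm (\<beta>1 \<and> a = p - 1) (c a (h j)) (c (Suc a mod p) (h j)) (x a (h j)) (x (Suc a mod p) (h j))"
      "edge_hom k pm (\<beta>2 \<and> b = q - 1) (c (g i) b) (c (g i) (Suc b mod q)) (x (g i) b) (x (g i) (Suc b mod q))"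
      using base a(1) b(1) \<open>g i < p\<close> \<open>h j < q\<close> unfolding torus_hom_def by blast+
    then show ?thesis
      using edge_hom_doubleton[OF sym a(2), where f = "\<lambda>u. c u (h j)" and y = "\<lambda>u. x u (h j)"]
        edge_hom_doubleton[OF sym b(2), where f = "c (g i)" and y = "x (g i)"] a(3) b(3)
      by simp
  qed
  then show ?thesis using sym unfolding torus_hom_def by blast
qed

(* Go back and forth along the edge {0, 1} for m - p steps, then once around C_p. *)
definition zigzag_fold :: "nat \<Rightarrow> nat \<Rightarrow> nat \<Rightarrow> nat" where
  "zigzag_fold m p i = (if i + p < m then i mod 2 else i + p - m)"

lemma cycle_fold_zigzag:
  assumes "2 \<le> p" "p \<le> m" "even (m - p)"
  shows "cycle_fold m p (zigzag_fold m p)"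
  unfolding cycle_fold_def
proof (intro allI impI)
  fix i assume "i < m"
  let ?f = "zigzag_fold m p"
  consider (zig) "Suc i + p < m" | (turn) "Suc i + p = m" | (run) "m < Suc i + p" "Suc i < m" | (close) "Suc i = m"
    using \<open>i < m\<close> by linarith
  then show "\<exists>a<p. {?f i, ?f (Suc i mod m)} = {a, Suc a mod p} \<and> (a = p - 1 \<longleftrightarrow> i = m - 1)"
  proof cases
    case zig
    then have "{?f i, ?f (Suc i mod m)} = {0, 1}"
      unfolding zigzag_fold_def by (cases "even i") (auto simp: odd_iff_mod_2_eq_one)
    then show ?thesis using assms zig by (intro exI[of _ 0]) auto
  next
    case turn
    then have "odd i" using assms by presburger
    with turn have "{?f i, ?f (Suc i mod m)} = {0, 1}"
      using assms unfolding zigzag_fold_def by (auto simp: odd_iff_mod_2_eq_one)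
    then show ?thesis using assms turn by (intro exI[of _ 0]) auto
  next
    case run
    then show ?thesis
      unfolding zigzag_fold_def by (intro exI[of _ "i + p - m"]) auto
  next
    case close
    then show ?thesis
      using assms unfolding zigzag_fold_def by (intro exI[of _ "p - 1"]) auto
  qed
qed

lemma switch_signs_to_last_edge:
  fixes s :: "nat \<Rightarrow> bool"
  defines "t i \<equiv> odd (\<Sum>l<i. of_bool (s l) :: nat)"
  assumes "i < m"
  shows "s i = ((odd (\<Sum>l<m. of_bool (s l) :: nat) \<and> i = m - 1) \<noteq> (t i \<noteq> t (Suc i mod m)))"
proof (cases "Suc i = m")
  case True
  then have "(\<Sum>l<m. of_bool (s l) :: nat) = (\<Sum>l<i. of_bool (s l)) + of_bool (s i)"
    unfolding True[symmetric] by (simp del: sum_of_bool_eq)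
  moreover have "i = m - 1" "Suc i mod m = 0" using True by auto
  ultimately show ?thesis unfolding t_def by (cases "s i") (simp_all del: sum_of_bool_eq)
next
  case False
  then have "Suc i mod m = Suc i" "i \<noteq> m - 1" using assms by auto
  then show ?thesis unfolding t_def by (cases "s i") (simp_all del: sum_of_bool_eq)
qed

lemma torus_hom_chi_table:
  assumes m: "3 \<le> m" and n: "3 \<le> n"
  shows "\<exists>c x pm. torus_hom m n s1 s2
    (chi_table (cycle_class (\<Sum>i<m. of_bool (s1 i)) m) (cycle_class (\<Sum>j<n. of_bool (s2 j)) n)) c x pm"
proof -
  define S1 where "S1 = (\<Sum>i<m. of_bool (s1 i) :: nat)"
  define S2 where "S2 = (\<Sum>j<n. of_bool (s2 j) :: nat)"
  define k where "k = chi_table (cycle_class S1 m) (cycle_class S2 n)"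
  define p where "p = (if odd m then 3 else 4 :: nat)"
  define q where "q = (if odd n then 3 else 4 :: nat)"
  have "\<exists>c x pm. torus_hom p q (\<lambda>a. odd S1 \<and> a = p - 1) (\<lambda>b. odd S2 \<and> b = q - 1) k c x pm"
    unfolding k_def p_def q_def cycle_class_def
    by (cases "even m"; cases "even n"; cases "even S1"; cases "even S2")
      (simp_all, (blast intro: torus_hom_small_cycles)+)
  then obtain c x pm
    where "torus_hom p q (\<lambda>a. odd S1 \<and> a = p - 1) (\<lambda>b. odd S2 \<and> b = q - 1) k c x pm"
    by blast
  moreover have "cycle_fold m p (zigzag_fold m p)" "cycle_fold n q (zigzag_fold n q)"
    using m n unfolding p_def q_def by (auto intro!: cycle_fold_zigzag; presburger)+
  ultimately have "torus_hom m n (\<lambda>i. odd S1 \<and> i = m - 1) (\<lambda>j. odd S2 \<and> j = n - 1) k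
      (\<lambda>i j. c (zigzag_fold m p i) (zigzag_fold n q j)) (\<lambda>i j. x (zigzag_fold m p i) (zigzag_fold n q j)) pm"
    by (rule torus_hom_fold)
  then have "torus_hom m n s1 s2 k (\<lambda>i j. c (zigzag_fold m p i) (zigzag_fold n q j))
      (\<lambda>i j. (x (zigzag_fold m p i) (zigzag_fold n q j) \<noteq> odd (\<Sum>l<i. of_bool (s1 l) :: nat))
        \<noteq> odd (\<Sum>l<j. of_bool (s2 l) :: nat)) pm"
    by (rule torus_hom_switch) (simp_all only: S1_def S2_def switch_signs_to_last_edge)
  then show ?thesis unfolding k_def S1_def S2_def by blast
qed

lemma Least_torus_hom:
  assumes "3 \<le> m" "3 \<le> n"
  shows "(LEAST k. \<exists>c x pm. torus_hom m n s1 s2 k c x pm)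
    = chi_table (cycle_class (\<Sum>i<m. of_bool (s1 i)) m) (cycle_class (\<Sum>j<n. of_bool (s2 j)) n)"
  using torus_hom_chi_table[OF assms] chi_table_le_torus_hom assms
  by (intro Least_equality) auto

section \<open>Reduction of signed homomorphisms to the torus grid\<close>

lemma switch_doubleton_iff:
  assumes "{p, q} \<in> E" "p \<noteq> q"
  shows "{p, q} \<in> switch E N X \<longleftrightarrow> ({p, q} \<in> N) \<noteq> ((p \<in> X) \<noteq> (q \<in> X))"
  using assms by (cases "p \<in> X"; cases "q \<in> X") (auto simp: switch_def)

lemma edge_hom_of_signed_hom:
  assumes "signed_graph {0..<k} F M"
    and "\<phi> p < k" "\<phi> q < k" "\<phi> ` {p, q} \<in> F" "\<phi> ` {p, q} \<in> M \<longleftrightarrow> {p, q} \<in> switch E N X"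
    and "{p, q} \<in> E" "p \<noteq> q"
  shows "edge_hom k (\<lambda>a b. {a, b} \<in> M) ({p, q} \<in> N) (\<phi> p) (\<phi> q) (p \<in> X) (q \<in> X)"
proof -
  have "\<phi> p \<noteq> \<phi> q"
    using assms(1,4) unfolding signed_graph_def by (auto simp: doubleton_eq_iff)
  then show ?thesis
    using assms(2,3,5) switch_doubleton_iff[OF assms(6,7)] unfolding edge_hom_def by simp
qed

lemma signed_hom_of_edge_homs:
  assumes sym: "\<And>a b. pm a b = pm b a"
    and vertices: "\<And>v. v \<in> V \<Longrightarrow> \<phi> v < k" and "X \<subseteq> V"
    and edges: "\<And>e. e \<in> E \<Longrightarrow>
      \<exists>p q. e = {p, q} \<and> p \<noteq> q \<and> edge_hom k pm (e \<in> N) (\<phi> p) (\<phi> q) (p \<in> X) (q \<in> X)"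
  shows "\<exists>F M. signed_graph {0..<k} F M \<and> signed_hom V E N {0..<k} F M \<phi>"
proof -
  let ?F = "{{a, b} | a b. a \<in> {0..<k} \<and> b \<in> {0..<k} \<and> a \<noteq> b}"
  let ?M = "{{a, b} | a b. a \<in> {0..<k} \<and> b \<in> {0..<k} \<and> a \<noteq> b \<and> pm a b}"
  have "signed_graph {0..<k} ?F ?M"
    unfolding signed_graph_def by auto
  moreover have "\<phi> ` e \<in> ?F \<and> (\<phi> ` e \<in> ?M \<longleftrightarrow> e \<in> switch E N X)" if "e \<in> E" for e
  proof -
    obtain p q where e: "e = {p, q}" "p \<noteq> q"
      and hom: "edge_hom k pm (e \<in> N) (\<phi> p) (\<phi> q) (p \<in> X) (q \<in> X)"
      using edges \<open>e \<in> E\<close> by blast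
    have "{\<phi> p, \<phi> q} \<in> ?M \<longleftrightarrow> pm (\<phi> p) (\<phi> q)"
      using hom sym unfolding edge_hom_def by (auto simp: doubleton_eq_iff)
    then show ?thesis
      using hom \<open>e \<in> E\<close> switch_doubleton_iff[of p q E N X] unfolding e edge_hom_def by auto
  qed
  ultimately show ?thesis
    using vertices \<open>X \<subseteq> V\<close> unfolding signed_hom_def by (intro exI[of _ ?F] exI[of _ ?M]) auto
qed

lemma inj_on_cycle_edges:
  assumes "3 \<le> m" "inj_on f {..<m}"
  shows "inj_on (\<lambda>i. {f i, f (Suc i mod m)}) {..<m}"
proof (rule inj_onI)
  fix i j assume i: "i \<in> {..<m}" and j: "j \<in> {..<m}"
    and "{f i, f (Suc i mod m)} = {f j, f (Suc j mod m)}"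
  moreover have "Suc i mod m \<in> {..<m}" "Suc j mod m \<in> {..<m}" using assms(1) by auto
  ultimately have "i = j \<or> (i = Suc j mod m \<and> j = Suc i mod m)"
    using inj_onD[OF assms(2)] i j by (auto simp: doubleton_eq_iff)
  then show "i = j"
    using assms(1) i j by (auto simp: mod_Suc split: if_splits)
qed

lemma card_cycle_edges_subset:
  assumes "3 \<le> m" "inj_on f {..<m}" "N \<subseteq> {{f i, f (Suc i mod m)} | i. i < m}"
  shows "card N = (\<Sum>i<m. of_bool ({f i, f (Suc i mod m)} \<in> N))"
proof -
  let ?e = "\<lambda>i. {f i, f (Suc i mod m)}" and ?I = "{i \<in> {..<m}. {f i, f (Suc i mod m)} \<in> N}"
  have "N = ?e ` ?I"
    using assms(3) by auto
  then have "card N = card (?e ` ?I)"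
    by (rule arg_cong)
  also have "\<dots> = card ?I"
    by (rule card_image, rule inj_on_subset[OF inj_on_cycle_edges[OF assms(1,2)]]) blast
  finally show ?thesis by (simp add: Int_def)
qed

locale cycle_product =
  fixes m n :: nat and f1 :: "nat \<Rightarrow> 'a" and f2 :: "nat \<Rightarrow> 'b"
    and V1 :: "'a set" and E1 N1 :: "'a set set" and V2 :: "'b set" and E2 N2 :: "'b set set"
  assumes m: "3 \<le> m" and n: "3 \<le> n"
    and bij1: "bij_betw f1 {..<m} V1" and bij2: "bij_betw f2 {..<n} V2"
    and E1: "E1 = {{f1 i, f1 (Suc i mod m)} | i. i < m}"
    and E2: "E2 = {{f2 j, f2 (Suc j mod n)} | j. j < n}"
    and N1: "N1 \<subseteq> E1" and N2: "N2 \<subseteq> E2"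
begin

abbreviation "PV \<equiv> prod_V V1 V2"
abbreviation "PE \<equiv> prod_E V1 E1 V2 E2"
abbreviation "PN \<equiv> prod_N V1 N1 V2 N2"

definition neg1 :: "nat \<Rightarrow> bool" where "neg1 i \<longleftrightarrow> {f1 i, f1 (Suc i mod m)} \<in> N1"
definition neg2 :: "nat \<Rightarrow> bool" where "neg2 j \<longleftrightarrow> {f2 j, f2 (Suc j mod n)} \<in> N2"

definition hor_edge :: "nat \<Rightarrow> nat \<Rightarrow> ('a \<times> 'b) set" where
  "hor_edge i j = {(f1 i, f2 j), (f1 (Suc i mod m), f2 j)}"
definition ver_edge :: "nat \<Rightarrow> nat \<Rightarrow> ('a \<times> 'b) set" where
  "ver_edge i j = {(f1 i, f2 j), (f1 i, f2 (Suc j mod n))}"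

lemma V1_eq: "V1 = f1 ` {..<m}" and V2_eq: "V2 = f2 ` {..<n}"
  using bij1 bij2 by (simp_all add: bij_betw_def)

lemma f1_Suc_neq: "i < m \<Longrightarrow> f1 (Suc i mod m) \<noteq> f1 i"
  using m bij1 by (auto simp: bij_betw_def inj_on_eq_iff mod_Suc)

lemma f2_Suc_neq: "j < n \<Longrightarrow> f2 (Suc j mod n) \<noteq> f2 j"
  using n bij2 by (auto simp: bij_betw_def inj_on_eq_iff mod_Suc)

lemma prod_E_eq: "PE = {hor_edge i j | i j. i < m \<and> j < n} \<union> {ver_edge i j | i j. i < m \<and> j < n}"
proof
  show "PE \<subseteq> {hor_edge i j | i j. i < m \<and> j < n} \<union> {ver_edge i j | i j. i < m \<and> j < n}"
  proof
    fix e assume "e \<in> PE"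
    then consider (ver) u v1 v2 where "e = {(u, v1), (u, v2)}" "u \<in> V1" "{v1, v2} \<in> E2"
      | (hor) u1 u2 v where "e = {(u1, v), (u2, v)}" "{u1, u2} \<in> E1" "v \<in> V2"
      unfolding prod_E_def by blast
    then show "e \<in> {hor_edge i j | i j. i < m \<and> j < n} \<union> {ver_edge i j | i j. i < m \<and> j < n}"
    proof cases
      case ver
      then obtain i j where "i < m" "u = f1 i" "j < n" "{v1, v2} = {f2 j, f2 (Suc j mod n)}"
        unfolding V1_eq E2 by blast
      then have "e = ver_edge i j" using ver(1) unfolding ver_edge_def by (auto simp: doubleton_eq_iff)
      then show ?thesis using \<open>i < m\<close> \<open>j < n\<close> by blast
    next
      case hor
      then obtain i j where "i < m" "{u1, u2} = {f1 i, f1 (Suc i mod m)}" "j < n" "v = f2 j"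
        unfolding V2_eq E1 by blast
      then have "e = hor_edge i j" using hor(1) unfolding hor_edge_def by (auto simp: doubleton_eq_iff)
      then show ?thesis using \<open>i < m\<close> \<open>j < n\<close> by blast
    qed
  qed
  show "{hor_edge i j | i j. i < m \<and> j < n} \<union> {ver_edge i j | i j. i < m \<and> j < n} \<subseteq> PE"
    unfolding prod_E_def hor_edge_def ver_edge_def E1 E2 V1_eq V2_eq by blast
qed

lemma hor_edge_in_prod_N_iff:
  assumes "i < m" "j < n"
  shows "hor_edge i j \<in> PN \<longleftrightarrow> neg1 i"
proof
  assume "hor_edge i j \<in> PN"
  then consider (ver) u v1 v2 where "hor_edge i j = {(u, v1), (u, v2)}"
    | (hor) u1 u2 v where "hor_edge i j = {(u1, v), (u2, v)}" "{u1, u2} \<in> N1"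
    unfolding prod_N_def by blast
  then show "neg1 i"
  proof cases
    case ver
    then show ?thesis using f1_Suc_neq[OF assms(1)] unfolding hor_edge_def by (auto simp: doubleton_eq_iff)
  next
    case hor
    then have "{u1, u2} = {f1 i, f1 (Suc i mod m)}" unfolding hor_edge_def by (auto simp: doubleton_eq_iff)
    then show ?thesis using hor(2) unfolding neg1_def by simp
  qed
next
  assume "neg1 i"
  then show "hor_edge i j \<in> PN" using assms unfolding prod_N_def hor_edge_def neg1_def V2_eq by blast
qed

lemma ver_edge_in_prod_N_iff:
  assumes "i < m" "j < n"
  shows "ver_edge i j \<in> PN \<longleftrightarrow> neg2 j"
proof
  assume "ver_edge i j \<in> PN"
  then consider (ver) u v1 v2 where "ver_edge i j = {(u, v1), (u, v2)}" "{v1, v2} \<in> N2"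
    | (hor) u1 u2 v where "ver_edge i j = {(u1, v), (u2, v)}"
    unfolding prod_N_def by blast
  then show "neg2 j"
  proof cases
    case ver
    then have "{v1, v2} = {f2 j, f2 (Suc j mod n)}" unfolding ver_edge_def by (auto simp: doubleton_eq_iff)
    then show ?thesis using ver(2) unfolding neg2_def by simp
  next
    case hor
    then show ?thesis using f2_Suc_neq[OF assms(2)] unfolding ver_edge_def by (auto simp: doubleton_eq_iff)
  qed
next
  assume "neg2 j"
  then show "ver_edge i j \<in> PN" using assms unfolding prod_N_def ver_edge_def neg2_def V1_eq by blast
qed

lemma torus_hom_of_signed_hom:
  assumes sg: "signed_graph {0..<k} F M" and hom: "signed_hom PV PE PN {0..<k} F M \<phi>"
  shows "\<exists>c x pm. torus_hom m n neg1 neg2 k c x pm"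
proof -
  obtain X where sw: "\<forall>e\<in>PE. \<phi> ` e \<in> M \<longleftrightarrow> e \<in> switch PE PN X"
    using hom unfolding signed_hom_def by blast
  have pair: "edge_hom k (\<lambda>a b. {a, b} \<in> M) ({p, q} \<in> PN) (\<phi> p) (\<phi> q) (p \<in> X) (q \<in> X)"
    if "{p, q} \<in> PE" "p \<noteq> q" "p \<in> PV" "q \<in> PV" for p q
    using that sw hom unfolding signed_hom_def by (intro edge_hom_of_signed_hom[OF sg]) auto
  have "torus_hom m n neg1 neg2 k (\<lambda>i j. \<phi> (f1 i, f2 j)) (\<lambda>i j. (f1 i, f2 j) \<in> X) (\<lambda>a b. {a, b} \<in> M)"
    unfolding torus_hom_def
  proof (intro conjI allI impI)
    show "{a, b} \<in> M \<longleftrightarrow> {b, a} \<in> M" for a b by (simp add: insert_commute)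
  next
    fix i j assume i: "i < m" and j: "j < n"
    then have "Suc i mod m < m" "Suc j mod n < n" by auto
    then have PV: "(f1 i, f2 j) \<in> PV" "(f1 (Suc i mod m), f2 j) \<in> PV" "(f1 i, f2 (Suc j mod n)) \<in> PV"
      using i j unfolding prod_V_def V1_eq V2_eq by auto
    have "hor_edge i j \<in> PE" "ver_edge i j \<in> PE"
      unfolding prod_E_eq using i j by blast+
    moreover have "(f1 i, f2 j) \<noteq> (f1 (Suc i mod m), f2 j)" "(f1 i, f2 j) \<noteq> (f1 i, f2 (Suc j mod n))"
      using f1_Suc_neq[OF i] f2_Suc_neq[OF j] by auto
    ultimately show "edge_hom k (\<lambda>a b. {a, b} \<in> M) (neg1 i) (\<phi> (f1 i, f2 j)) (\<phi> (f1 (Suc i mod m), f2 j))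
        ((f1 i, f2 j) \<in> X) ((f1 (Suc i mod m), f2 j) \<in> X)"
      "edge_hom k (\<lambda>a b. {a, b} \<in> M) (neg2 j) (\<phi> (f1 i, f2 j)) (\<phi> (f1 i, f2 (Suc j mod n)))
        ((f1 i, f2 j) \<in> X) ((f1 i, f2 (Suc j mod n)) \<in> X)"
      using pair[OF _ _ PV(1,2)] pair[OF _ _ PV(1,3)]
        hor_edge_in_prod_N_iff[OF i j] ver_edge_in_prod_N_iff[OF i j]
      unfolding hor_edge_def ver_edge_def by simp_all
  qed
  then show ?thesis by blast
qed

definition grid_map :: "(nat \<Rightarrow> nat \<Rightarrow> 'c) \<Rightarrow> 'a \<times> 'b \<Rightarrow> 'c" where
  "grid_map c v = c (the_inv_into {..<m} f1 (fst v)) (the_inv_into {..<n} f2 (snd v))"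

lemma grid_map_apply: "i < m \<Longrightarrow> j < n \<Longrightarrow> grid_map c (f1 i, f2 j) = c i j"
  using bij1 bij2 unfolding grid_map_def bij_betw_def by (simp add: the_inv_into_f_f)

lemma signed_hom_of_torus_hom:
  assumes hom: "torus_hom m n neg1 neg2 k c x pm"
  shows "\<exists>F M (\<phi> :: 'a \<times> 'b \<Rightarrow> nat). signed_graph {0..<k} F M \<and> signed_hom PV PE PN {0..<k} F M \<phi>"
proof -
  define X where "X = {v \<in> PV. grid_map x v}"
  have X: "(f1 i, f2 j) \<in> X \<longleftrightarrow> x i j" if "i < m" "j < n" for i j
    using that grid_map_apply unfolding X_def prod_V_def V1_eq V2_eq by auto
  have edges: "edge_hom k pm (neg1 i) (c i j) (c (Suc i mod m) j) (x i j) (x (Suc i mod m) j)"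
    "edge_hom k pm (neg2 j) (c i j) (c i (Suc j mod n)) (x i j) (x i (Suc j mod n))"
    if "i < m" "j < n" for i j
    using hom that unfolding torus_hom_def by blast+
  have "\<exists>F M. signed_graph {0..<k} F M \<and> signed_hom PV PE PN {0..<k} F M (grid_map c)"
  proof (rule signed_hom_of_edge_homs)
    show "pm a b = pm b a" for a b using hom unfolding torus_hom_def by blast
    show "X \<subseteq> PV" unfolding X_def by blast
    fix v assume "v \<in> PV"
    then obtain i j where ij: "i < m" "j < n" and "v = (f1 i, f2 j)"
      unfolding prod_V_def V1_eq V2_eq by blast
    then have "grid_map c v = c i j" by (simp add: grid_map_apply)
    then show "grid_map c v < k"
      using edges(1)[OF ij] unfolding edge_hom_def by simp
  next
    fix e assume "e \<in> PE"
    then consider (hor) i j where "i < m" "j < n" "e = hor_edge i j"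
      | (ver) i j where "i < m" "j < n" "e = ver_edge i j"
      unfolding prod_E_eq by blast
    then show "\<exists>p q. e = {p, q} \<and> p \<noteq> q \<and> edge_hom k pm (e \<in> PN) (grid_map c p) (grid_map c q) (p \<in> X) (q \<in> X)"
    proof cases
      case hor
      then have "Suc i mod m < m" by simp
      then have "edge_hom k pm (e \<in> PN) (grid_map c (f1 i, f2 j)) (grid_map c (f1 (Suc i mod m), f2 j))
          ((f1 i, f2 j) \<in> X) ((f1 (Suc i mod m), f2 j) \<in> X)"
        using hor edges(1) hor_edge_in_prod_N_iff by (simp add: grid_map_apply X)
      moreover have "e = {(f1 i, f2 j), (f1 (Suc i mod m), f2 j)}" "(f1 i, f2 j) \<noteq> (f1 (Suc i mod m), f2 j)"
        using hor f1_Suc_neq[OF hor(1)] unfolding hor_edge_def by auto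
      ultimately show ?thesis by blast
    next
      case ver
      then have "Suc j mod n < n" by simp
      then have "edge_hom k pm (e \<in> PN) (grid_map c (f1 i, f2 j)) (grid_map c (f1 i, f2 (Suc j mod n)))
          ((f1 i, f2 j) \<in> X) ((f1 i, f2 (Suc j mod n)) \<in> X)"
        using ver edges(2) ver_edge_in_prod_N_iff by (simp add: grid_map_apply X)
      moreover have "e = {(f1 i, f2 j), (f1 i, f2 (Suc j mod n))}" "(f1 i, f2 j) \<noteq> (f1 i, f2 (Suc j mod n))"
        using ver f2_Suc_neq[OF ver(2)] unfolding ver_edge_def by auto
      ultimately show ?thesis by blast
    qed
  qed
  then show ?thesis by blast
qed

lemma chi_s_eq_Least_torus_hom:
  "chi_s PV PE PN = (LEAST k. \<exists>c x pm. torus_hom m n neg1 neg2 k c x pm)"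
proof -
  have "(\<exists>F M (\<phi> :: 'a \<times> 'b \<Rightarrow> nat). signed_graph {0..<k} F M \<and> signed_hom PV PE PN {0..<k} F M \<phi>)
      \<longleftrightarrow> (\<exists>c x pm. torus_hom m n neg1 neg2 k c x pm)" for k
    using torus_hom_of_signed_hom signed_hom_of_torus_hom by blast
  then show ?thesis unfolding chi_s_def by simp
qed

lemma card_N1: "card N1 = (\<Sum>i<m. of_bool (neg1 i))"
  using card_cycle_edges_subset[OF m _ N1[unfolded E1]] bij1 unfolding neg1_def bij_betw_def by blast

lemma card_N2: "card N2 = (\<Sum>j<n. of_bool (neg2 j))"
  using card_cycle_edges_subset[OF n _ N2[unfolded E2]] bij2 unfolding neg2_def bij_betw_def by blast

end

theorem theorem6p2:
  fixes V1 :: "'a set" and E1 N1 :: "'a set set"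
    and V2 :: "'b set" and E2 N2 :: "'b set set"
  assumes "signed_cycle V1 E1 N1" and "signed_cycle V2 E2 N2"
  shows "chi_s (prod_V V1 V2) (prod_E V1 E1 V2 E2) (prod_N V1 N1 V2 N2)
           = chi_table (cycle_type V1 N1) (cycle_type V2 N2)"
proof -
  obtain m f1 where "3 \<le> m" "bij_betw f1 {..<m} V1" "E1 = {{f1 i, f1 (Suc i mod m)} | i. i < m}" "N1 \<subseteq> E1"
    using assms(1) unfolding signed_cycle_def is_cycle_def by blast
  moreover obtain n f2 where "3 \<le> n" "bij_betw f2 {..<n} V2" "E2 = {{f2 j, f2 (Suc j mod n)} | j. j < n}" "N2 \<subseteq> E2"
    using assms(2) unfolding signed_cycle_def is_cycle_def by blast
  ultimately interpret cycle_product m n f1 f2 V1 E1 N1 V2 E2 N2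
    by unfold_locales
  have "card V1 = m" "card V2 = n"
    using bij1 bij2 by (simp_all add: bij_betw_same_card[symmetric])
  then show ?thesis
    unfolding cycle_type_eq_cycle_class card_N1 card_N2 chi_s_eq_Least_torus_hom
    using Least_torus_hom[OF m n] by simp
qed

end
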